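(* Let $1>R>\tfrac12$ and $R>P>0$, and let $$\mathrm{ZDSstrip}=\{(x,y)\in\mathbb R^2:\ x\ge -1\ge y,\ -R^{-1}\ge x+y\ge -P^{-1}\}.$$ Assume $(\bar\alpha,\bar\beta)\in\mathrm{ZDSstrip}$ with $\bar\alpha+\bar\beta=-Z^{-1}$. Then $-\bar\beta\ge\max(1,|\bar\alpha|)$, and $-\bar\beta=|\bar\alpha|$ if and only if $\bar\alpha=\bar\beta=-1$. If also $(\bar a,\bar b)\in\mathrm{ZDSstrip}$, then $D=\bar\beta\bar b-\bar\alpha\bar a\ge0$, with equality if and only if $\bar\alpha=\bar\beta=\bar a=\bar b=-1$. *)

theory Defs
  imports Complex_Main
begin

definition ZDSstrip :: "real \<Rightarrow> real \<Rightarrow> (real \<times> real) set" where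
  "ZDSstrip R P = {(x, y). x \<ge> -1 \<and> -1 \<ge> y \<and> - inverse R \<ge> x + y \<and> x + y \<ge> - inverse P}"

end

theory Submission
  imports Defs
begin

text \<open>Since \<open>R < 1\<close>, every point of the strip satisfies \<open>x + y < -1\<close>; together with
  \<open>x \<ge> -1 \<ge> y\<close> this gives \<open>|x| \<le> -y\<close>, with equality only at \<open>(-1, -1)\<close>. Then
  \<open>\<beta> b - \<alpha> a = (-\<beta>)(-b) - \<alpha> a \<ge> |\<alpha>| |a| - \<alpha> a \<ge> 0\<close>, and equality in the product
  bound forces equality in both factors.\<close>

lemma ZDSstrip_sum_lt:
  assumes "0 < R" "R < 1" "(x, y) \<in> ZDSstrip R P"
  shows "x + y < -1"
proof -
  have "1 < inverse R" using assms(1,2) by (rule one_less_inverse)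
  with assms(3) show ?thesis unfolding ZDSstrip_def by auto
qed

lemma ZDSstrip_abs_le:
  assumes "0 < R" "R < 1" "(x, y) \<in> ZDSstrip R P"
  shows "1 \<le> -y" "\<bar>x\<bar> \<le> -y" "-y = \<bar>x\<bar> \<longleftrightarrow> x = -1 \<and> y = -1"
  using ZDSstrip_sum_lt[OF assms] assms(3) unfolding ZDSstrip_def by (auto simp: abs_if)

lemma mult_eq_mult_mono_imp_eq:
  fixes a b c d :: "'a :: linordered_semidom"
  assumes "0 \<le> a" "a \<le> b" "0 \<le> c" "c \<le> d" "0 < b" "0 < d" and "a * c = b * d"
  shows "a = b \<and> c = d"
proof (rule ccontr)
  assume "\<not> (a = b \<and> c = d)"
  then have "a < b \<or> c < d" using assms(2,4) by auto
  moreover have "a * c \<le> a * d" "a * c \<le> b * c"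
    using assms(1-4) by (simp_all add: mult_left_mono mult_right_mono)
  moreover have "a < b \<Longrightarrow> a * d < b * d" "c < d \<Longrightarrow> b * c < b * d"
    using assms(5,6) by (simp_all add: mult_strict_right_mono mult_strict_left_mono)
  ultimately have "a * c < b * d" by fastforce
  with assms(7) show False by simp
qed

lemma ZDSstrip_det_nonneg:
  assumes "0 < R" "R < 1" "(\<alpha>, \<beta>) \<in> ZDSstrip R P" "(a, b) \<in> ZDSstrip R P"
  shows "\<beta> * b - \<alpha> * a \<ge> 0"
    and "\<beta> * b - \<alpha> * a = 0 \<longleftrightarrow> \<alpha> = -1 \<and> \<beta> = -1 \<and> a = -1 \<and> b = -1"
proof -
  note \<alpha>\<beta> = ZDSstrip_abs_le[OF assms(1,2,3)]
  note ab = ZDSstrip_abs_le[OF assms(1,2,4)]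
  have prod_le: "\<bar>\<alpha>\<bar> * \<bar>a\<bar> \<le> (-\<beta>) * (-b)"
    using \<alpha>\<beta> ab by (intro mult_mono) auto
  have cross_le: "\<alpha> * a \<le> \<bar>\<alpha>\<bar> * \<bar>a\<bar>"
    by (simp add: abs_mult[symmetric])
  show "\<beta> * b - \<alpha> * a \<ge> 0" using prod_le cross_le by simp
  show "\<beta> * b - \<alpha> * a = 0 \<longleftrightarrow> \<alpha> = -1 \<and> \<beta> = -1 \<and> a = -1 \<and> b = -1"
  proof
    assume "\<beta> * b - \<alpha> * a = 0"
    then have "\<bar>\<alpha>\<bar> * \<bar>a\<bar> = (-\<beta>) * (-b)" using prod_le cross_le by simp
    then have "\<bar>\<alpha>\<bar> = -\<beta> \<and> \<bar>a\<bar> = -b"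
      using \<alpha>\<beta> ab by (intro mult_eq_mult_mono_imp_eq) auto
    then show "\<alpha> = -1 \<and> \<beta> = -1 \<and> a = -1 \<and> b = -1" using \<alpha>\<beta>(3) ab(3) by auto
  qed simp
qed

theorem lemma3p1:
  fixes R P Z \<alpha> \<beta> :: real
  assumes "1 > R" and "R > 1/2" and "R > P" and "P > 0"
    and "(\<alpha>, \<beta>) \<in> ZDSstrip R P"
    and "\<alpha> + \<beta> = - inverse Z"
  shows "- \<beta> \<ge> max 1 \<bar>\<alpha>\<bar>
    \<and> ((- \<beta> = \<bar>\<alpha>\<bar>) \<longleftrightarrow> (\<alpha> = -1 \<and> \<beta> = -1))
    \<and> (\<forall>a b :: real. (a, b) \<in> ZDSstrip R P \<longrightarrow>
           \<beta> * b - \<alpha> * a \<ge> 0 \<and>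
           (\<beta> * b - \<alpha> * a = 0 \<longleftrightarrow> (\<alpha> = -1 \<and> \<beta> = -1 \<and> a = -1 \<and> b = -1)))"
proof -
  have R: "0 < R" "R < 1" using assms(1,2) by auto
  show ?thesis
    using ZDSstrip_abs_le[OF R assms(5)] ZDSstrip_det_nonneg[OF R assms(5)] by auto
qed

end
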